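(* Let $k,a,b$ be positive real numbers and $\{S^{(a,b)}_{k,n}\}_{n\ge0}$ the $k$-FL sequence. For any integers $m\ge n\ge0$, $S^{(a,b)}_{k,m}S^{(a,b)}_{k,n+1}-S^{(a,b)}_{k,m+1}S^{(a,b)}_{k,n}=(-1)^n\{a^2-(k^2+4)b^2\}F_{k,m-n}$.
   Context: The $k$-FL sequence (for positive reals $k,a,b$) is $S^{(a,b)}_{k,0}=2b$, $S^{(a,b)}_{k,1}=bk+a$, $S^{(a,b)}_{k,n}=kS^{(a,b)}_{k,n-1}+S^{(a,b)}_{k,n-2}$. $F_{k,n}$ is the $k$-Fibonacci sequence: $F_{k,0}=0$, $F_{k,1}=1$, $F_{k,n}=kF_{k,n-1}+F_{k,n-2}$. *)

theory Defs
  imports Complex_Main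
begin

fun kfib :: "real \<Rightarrow> nat \<Rightarrow> real" where
  "kfib k 0 = 0"
| "kfib k (Suc 0) = 1"
| "kfib k (Suc (Suc n)) = k * kfib k (Suc n) + kfib k n"

fun kFL :: "real \<Rightarrow> real \<Rightarrow> real \<Rightarrow> nat \<Rightarrow> real" where
  "kFL k a b 0 = 2 * b"
| "kFL k a b (Suc 0) = b * k + a"
| "kFL k a b (Suc (Suc n)) = k * kFL k a b (Suc n) + kFL k a b n"

end

theory Submission
  imports Defs
begin

text \<open>For fixed n, the left-hand side is linear in the pair (S_m, S_{m+1}), so as a function of
  d = m - n it satisfies the k-Fibonacci recurrence. It vanishes at d = 0 and equals the
  Cassini-type expression S_{n+1}^2 - S_{n+2} S_n = (-1)^n (a^2 - (k^2+4) b^2) at d = 1,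
  hence it is that constant times F_{k,d}.\<close>

lemma kfib_recurrence_eq_mult_kfib:
  fixes x :: "nat \<Rightarrow> real"
  assumes "x 0 = 0" and "\<And>d. x (Suc (Suc d)) = k * x (Suc d) + x d"
  shows "x d = x 1 * kfib k d"
proof -
  have "x d = x 1 * kfib k d \<and> x (Suc d) = x 1 * kfib k (Suc d)"
    by (induction d) (simp_all add: assms algebra_simps)
  then show ?thesis ..
qed

lemma kFL_cassini:
  "kFL k a b (Suc n) ^ 2 - kFL k a b (Suc (Suc n)) * kFL k a b n
     = (-1) ^ n * (a\<^sup>2 - (k\<^sup>2 + 4) * b\<^sup>2)"
proof (induction n)
  case 0
  show ?case by (simp add: power2_eq_square algebra_simps)
next
  case (Suc n)
  have "kFL k a b (Suc (Suc n)) ^ 2 - kFL k a b (Suc (Suc (Suc n))) * kFL k a b (Suc n)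
      = - (kFL k a b (Suc n) ^ 2 - kFL k a b (Suc (Suc n)) * kFL k a b n)"
    by (simp add: power2_eq_square algebra_simps)
  with Suc.IH show ?case by simp
qed

theorem theorem4p21:
  fixes k a b :: real and m n :: nat
  assumes "k > 0" and "a > 0" and "b > 0" and "m \<ge> n"
  shows "kFL k a b m * kFL k a b (n + 1) - kFL k a b (m + 1) * kFL k a b n
           = (-1) ^ n * (a\<^sup>2 - (k\<^sup>2 + 4) * b\<^sup>2) * kfib k (m - n)"
proof -
  define S where "S = kFL k a b"
  define x where "x d = S (n + d) * S (n + 1) - S (n + d + 1) * S n" for d
  have "x 0 = 0"
    by (simp add: x_def)
  moreover have "x (Suc (Suc d)) = k * x (Suc d) + x d" for d
  proof -
    have "S (Suc (Suc j)) = k * S (Suc j) + S j" for j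
      by (simp add: S_def)
    then show ?thesis
      unfolding x_def add_Suc_right add_Suc by (simp add: algebra_simps)
  qed
  ultimately have "x (m - n) = x 1 * kfib k (m - n)"
    by (rule kfib_recurrence_eq_mult_kfib)
  also have "x 1 = (-1) ^ n * (a\<^sup>2 - (k\<^sup>2 + 4) * b\<^sup>2)"
    using kFL_cassini[of k a b n] by (simp add: x_def S_def power2_eq_square)
  finally show ?thesis
    using \<open>m \<ge> n\<close> by (simp add: x_def S_def)
qed

end
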